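(* Let $T$ be the tournament on vertex set $\{0,1,2,3,4,5\}$ with arc set $\{(0,1),(0,3),(1,2),(1,5),(2,0),(2,4),(3,1),(3,2),(3,4),(4,0),(4,1),(4,5),(5,0),(5,2),(5,3)\}$. For every $n\geq 3$, there is a homomorphism from the directed cycle $\overrightarrow{C}_n$ to $T$.
   Context: $\overrightarrow{C}_n$ is the directed cycle on $n$ vertices (asymmetric). A homomorphism from a digraph $D$ to a digraph $H$ is a map $\phi:V(D)\to V(H)$ such that $(\phi(u),\phi(v))\in A(H)$ whenever $(u,v)\in A(D)$. *)

theory Defs
  imports Main
begin

definition dcycle_verts :: "nat \<Rightarrow> nat set" where
  "dcycle_verts n = {0..<n}"

definition dcycle_arcs :: "nat \<Rightarrow> (nat \<times> nat) set" where
  "dcycle_arcs n = {(i, (i + 1) mod n) | i. i < n}"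

definition is_digraph_hom ::
  "'a set \<Rightarrow> ('a \<times> 'a) set \<Rightarrow> 'b set \<Rightarrow> ('b \<times> 'b) set \<Rightarrow> ('a \<Rightarrow> 'b) \<Rightarrow> bool" where
  "is_digraph_hom VD AD VH AH \<phi> \<longleftrightarrow>
     (\<forall>v\<in>VD. \<phi> v \<in> VH) \<and> (\<forall>u v. (u, v) \<in> AD \<longrightarrow> (\<phi> u, \<phi> v) \<in> AH)"

definition T_verts :: "nat set" where
  "T_verts = {0,1,2,3,4,5}"

definition T_arcs :: "(nat \<times> nat) set" where
  "T_arcs = {(0,1),(0,3),(1,2),(1,5),(2,0),(2,4),(3,1),(3,2),(3,4),(4,0),(4,1),(4,5),(5,0),(5,2),(5,3)}"

end

theory Submission
  imports Defs
begin

text \<open>A homomorphism from the directed \<open>n\<close>-cycle is the same thing as a closed walk of length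
  \<open>n\<close>, and closed walks through a common vertex can be concatenated.  The tournament has closed
  walks \<open>0 \<rightarrow> 1 \<rightarrow> 2 \<rightarrow> 0\<close>, \<open>0 \<rightarrow> 1 \<rightarrow> 2 \<rightarrow> 4 \<rightarrow> 0\<close> and \<open>0 \<rightarrow> 1 \<rightarrow> 2 \<rightarrow> 4 \<rightarrow> 5 \<rightarrow> 0\<close> of lengths 3, 4
  and 5, and every \<open>n \<ge> 3\<close> is one of 3, 4, 5 plus a multiple of 3.\<close>

definition closed_walk :: "('a \<times> 'a) set \<Rightarrow> 'a list \<Rightarrow> bool" where
  "closed_walk A xs \<longleftrightarrow> successively (\<lambda>u v. (u, v) \<in> A) (xs @ [hd xs])"

lemma closed_walk_append:
  assumes "closed_walk A xs" "closed_walk A ys" "hd ys = hd xs"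
  shows "closed_walk A (xs @ ys)"
proof (cases "xs = [] \<or> ys = []")
  case True
  then show ?thesis using assms by auto
next
  case False
  have "(xs @ ys) @ [hd (xs @ ys)] = xs @ (ys @ [hd ys])"
    using False assms(3) by simp
  then show ?thesis
    using assms(1,2) False unfolding closed_walk_def
    by (simp add: successively_append_iff)
qed

lemma closed_walk_append_replicate:
  assumes "closed_walk A xs" "closed_walk A ys" "hd ys = hd xs"
  shows "closed_walk A (xs @ concat (replicate k ys))"
  using assms
proof (induction k arbitrary: xs)
  case 0
  then show ?case by simp
next
  case (Suc k)
  have "closed_walk A (xs @ ys)" and "hd ys = hd (xs @ ys)"
    using Suc.prems closed_walk_append by (auto simp: hd_append)
  then have "closed_walk A ((xs @ ys) @ concat (replicate k ys))"
    using Suc.IH Suc.prems(2) by blast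
  then show ?case by simp
qed

lemma is_digraph_hom_dcycle_closed_walk:
  assumes "closed_walk A xs" "set xs \<subseteq> V"
  shows "is_digraph_hom (dcycle_verts (length xs)) (dcycle_arcs (length xs)) V A (nth xs)"
proof -
  let ?ys = "xs @ [hd xs]"
  have nth_wrap: "?ys ! Suc i = xs ! (Suc i mod length xs)" if "i < length xs" for i
  proof (cases "Suc i < length xs")
    case True
    then show ?thesis by (simp add: nth_append)
  next
    case False
    then have "Suc i = length xs" and "xs \<noteq> []" using that by auto
    then show ?thesis by (simp add: nth_append hd_conv_nth)
  qed
  have "(xs ! i, xs ! (Suc i mod length xs)) \<in> A" if "i < length xs" for i
    using successively_nth[OF assms(1)[unfolded closed_walk_def], of i] that
    by (simp add: nth_wrap nth_append[of xs _ i])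
  then show ?thesis
    using assms(2) by (auto simp: is_digraph_hom_def dcycle_verts_def dcycle_arcs_def)
qed

lemma dcycle_hom_of_closed_walks:
  assumes "closed_walk A xs" "closed_walk A ys" "hd ys = hd xs"
    and "set xs \<subseteq> V" "set ys \<subseteq> V" "n = length xs + k * length ys"
  shows "\<exists>\<phi>. is_digraph_hom (dcycle_verts n) (dcycle_arcs n) V A \<phi>"
proof -
  let ?w = "xs @ concat (replicate k ys)"
  have "closed_walk A ?w"
    using assms(1-3) by (rule closed_walk_append_replicate)
  moreover have "set ?w \<subseteq> V"
    using assms(4,5) by (cases k) auto
  moreover have "length ?w = n"
    using assms(6) by (simp add: length_concat sum_list_replicate)
  ultimately show ?thesis
    using is_digraph_hom_dcycle_closed_walk by metis
qed

lemma T_closed_walks: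
  "closed_walk T_arcs [0, 1, 2]"
  "closed_walk T_arcs [0, 1, 2, 4]"
  "closed_walk T_arcs [0, 1, 2, 4, 5]"
  by (simp_all add: closed_walk_def T_arcs_def)

theorem mainTheorem17:
  fixes n :: nat
  assumes "n \<ge> 3"
  shows "\<exists>\<phi> :: nat \<Rightarrow> nat. is_digraph_hom (dcycle_verts n) (dcycle_arcs n) T_verts T_arcs \<phi>"
proof -
  let ?k = "(n - 3) div 3"
  consider "n = 3 + ?k * 3" | "n = 4 + ?k * 3" | "n = 5 + ?k * 3"
    using assms by linarith
  then show ?thesis
  proof cases
    case 1
    show ?thesis
      by (rule dcycle_hom_of_closed_walks[OF T_closed_walks(1) T_closed_walks(1), where k = ?k])
        (use 1 in \<open>simp_all add: T_verts_def\<close>)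
  next
    case 2
    show ?thesis
      by (rule dcycle_hom_of_closed_walks[OF T_closed_walks(2) T_closed_walks(1), where k = ?k])
        (use 2 in \<open>simp_all add: T_verts_def\<close>)
  next
    case 3
    show ?thesis
      by (rule dcycle_hom_of_closed_walks[OF T_closed_walks(3) T_closed_walks(1), where k = ?k])
        (use 3 in \<open>simp_all add: T_verts_def\<close>)
  qed
qed

end
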